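(* Let $N,K,T$ be positive integers, $\mathcal{N}=\{1,\dots,N\}$, $\mathcal{K}=\{1,\dots,K\}$, $\mathcal{T}=\{1,\dots,T\}$. For each $(n,k,t)\in\mathcal{N}\times\mathcal{K}\times\mathcal{T}$ let $h_n[k,t]$ be a random variable with Gamma distribution of shape $\kappa_n[k,t]>0$ and scale $g_n[k,t]/\kappa_n[k,t]$, where $g_n[k,t]>0$. Let $\delta^2>0$, $\bar p>0$, $\bar\upsilon>0$, let $\bar\tau$ be a positive integer, and let $\varepsilon_\theta$ be a positive integer. A policy $\boldsymbol{\pi}=(\boldsymbol{\mathcal{A}},\boldsymbol{\mathcal{P}})$ consists of $a_n[k,t]\in\{0,1\}$ and $p_n[k,t]\ge 0$ for all $(n,k,t)$ such that $\sum_{n\in\mathcal{N}}a_n[k,t]\le 1$ for all $k,t$ and $\sum_{n\in\mathcal{N}}\sum_{k\in\mathcal{K}}p_n[k,t]\le\bar p$ for all $t$. Put $c_n[k,t]=\log_2\!\big(1+p_n[k,t]h_n[k,t]/\delta^2\big)$, $\upsilon(t',t'')=\sum_{n\in\mathcal{N}}\sum_{k\in\mathcal{K}}\sum_{t=t'}^{t''-1}c_n[k,t]a_n[k,t]$, $\theta(\boldsymbol{\pi})=\max_{n\in\mathcal{N},t\in\mathcal{T}}\sum_{k\in\mathcal{K}}a_n[k,t]$ and $E(\boldsymbol{\pi})=\sum_{n,k,t}a_n[k,t]p_n[k,t]$. A sampling sequence is $\mathbf{t}=(t_1,\dots,t_I)$ (with $I$ a free positive integer) together with $t_0=1$ and $t_{I+1}=T+1$,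 such that $t_0<t_1<\dots<t_I\le T$ and $1\le t_{i+1}-t_i\le\bar\tau$ for all $i\in\mathcal{I}=\{0,1,\dots,I\}$; let $\Upsilon$ be the set of such sequences. Consider $$\mathscr{P}3:\ \min_{\boldsymbol{\mathcal{A}},\boldsymbol{\mathcal{P}},\mathbf{t}}\ E(\boldsymbol{\pi})\ \text{ s.t. }\ \mathbb{E}\{\upsilon(t_i,t_{i+1})\}\ge\bar\upsilon\ \forall i\in\mathcal{I},\ \ \theta(\boldsymbol{\pi})\le\varepsilon_\theta,\ \ \boldsymbol{\pi}\text{ a policy},\ \mathbf{t}\in\Upsilon,$$ where the expectation is over the channels $h_n[k,t]$. For integers $1\le t'<t''\le T+1$ let $\mathcal{T}(t',t'')=\{t',\dots,t''-1\}$ and let $E^*(t',t'')$ be the optimal value (equal to $+\infty$ if infeasible) of the inner problem $$\mathscr{P}\text{3-2}:\ \min\ \sum_{n\in\mathcal{N},k\in\mathcal{K},t\in\mathcal{T}(t',t'')}a_n[k,t]p_n[k,t]$$ over $a_n[k,t]\in\{0,1\}$, $p_n[k,t]\ge0$ for $t\in\mathcal{T}(t',t'')$, subject to $\mathbb{E}\{\upsilon(t',t'')\}\ge\bar\upsilon$, $\sum_{k}a_n[k,t]\le\varepsilon_\theta$ for all $n$ and $t\in\mathcal{T}(t',t'')$, $\sum_n a_n[k,t]\le 1$ for all $k$ and $t\in\mathcal{T}(t',t'')$, and $\sum_{n,k}p_n[k,t]\le\bar p$ for all $t\in\mathcal{T}(t',t'')$. Then $\mathscr{P}3$ is equivalent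 to the outer problem $$\mathscr{P}\text{3-1}:\ \min_{\mathbf{t}\in\Upsilon}\ \sum_{i\in\mathcal{I}}E^*(t_i,t_{i+1}),$$ i.e., the optimal values coincide, and an optimal solution of $\mathscr{P}3$ is obtained from an optimal $\mathbf{t}$ of $\mathscr{P}\text{3-1}$ together with optimal solutions of $\mathscr{P}\text{3-2}$ on each interval $\mathcal{T}(t_i,t_{i+1})$.
   Context: This models a UAV sending status updates to $N$ base stations over $K$ resource blocks and $T$ slots; $a_n[k,t]$ indicates that resource block $k$ in slot $t$ is used for the link to base station $n$, $p_n[k,t]$ is the transmit power. *)

theory Defs
  imports "HOL-Probability.Probability"
begin

text \<open>Policies are functions
  a p :: nat \<Rightarrow> nat \<Rightarrow> nat \<Rightarrow> real (arguments n k t); only their values on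
  the index set matter.\<close>

definition gamma_density :: "real \<Rightarrow> real \<Rightarrow> real \<Rightarrow> real" where
  "gamma_density alpha beta x =
     (if 0 < x then x powr (alpha - 1) * exp (- x / beta) / (Gamma alpha * beta powr alpha) else 0)"

definition gamma_distr :: "real \<Rightarrow> real \<Rightarrow> real measure" where
  "gamma_distr alpha beta = density lborel (\<lambda>x. ennreal (gamma_density alpha beta x))"

definition exp_rate ::
  "(nat \<Rightarrow> nat \<Rightarrow> nat \<Rightarrow> real) \<Rightarrow> (nat \<Rightarrow> nat \<Rightarrow> nat \<Rightarrow> real) \<Rightarrow> real
   \<Rightarrow> nat \<Rightarrow> nat \<Rightarrow> nat \<Rightarrow> real \<Rightarrow> real" where
  "exp_rate kappa g delta2 n k t pw =
     integral\<^sup>L (gamma_distr (kappa n k t) (g n k t / kappa n k t))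
       (\<lambda>h. log 2 (1 + pw * h / delta2))"

text \<open>E{ upsilon(t', t'') } (a is deterministic, so by linearity of expectation).\<close>
definition exp_ups ::
  "nat \<Rightarrow> nat \<Rightarrow> (nat \<Rightarrow> nat \<Rightarrow> nat \<Rightarrow> real) \<Rightarrow> (nat \<Rightarrow> nat \<Rightarrow> nat \<Rightarrow> real) \<Rightarrow> real
   \<Rightarrow> (nat \<Rightarrow> nat \<Rightarrow> nat \<Rightarrow> real) \<Rightarrow> (nat \<Rightarrow> nat \<Rightarrow> nat \<Rightarrow> real) \<Rightarrow> nat \<Rightarrow> nat \<Rightarrow> real" where
  "exp_ups N K kappa g delta2 a p t1 t2 =
     (\<Sum>n\<in>{1..N}. \<Sum>k\<in>{1..K}. \<Sum>t\<in>{t1..<t2}.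
        exp_rate kappa g delta2 n k t (p n k t) * a n k t)"

definition is_policy ::
  "nat \<Rightarrow> nat \<Rightarrow> nat \<Rightarrow> real \<Rightarrow> (nat \<Rightarrow> nat \<Rightarrow> nat \<Rightarrow> real) \<Rightarrow> (nat \<Rightarrow> nat \<Rightarrow> nat \<Rightarrow> real) \<Rightarrow> bool" where
  "is_policy N K T pbar a p \<longleftrightarrow>
     (\<forall>n\<in>{1..N}. \<forall>k\<in>{1..K}. \<forall>t\<in>{1..T}. a n k t \<in> {0, 1} \<and> 0 \<le> p n k t) \<and>
     (\<forall>k\<in>{1..K}. \<forall>t\<in>{1..T}. (\<Sum>n\<in>{1..N}. a n k t) \<le> 1) \<and>
     (\<forall>t\<in>{1..T}. (\<Sum>n\<in>{1..N}. \<Sum>k\<in>{1..K}. p n k t) \<le> pbar)"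

definition theta :: "nat \<Rightarrow> nat \<Rightarrow> nat \<Rightarrow> (nat \<Rightarrow> nat \<Rightarrow> nat \<Rightarrow> real) \<Rightarrow> real" where
  "theta N K T a = Max {(\<Sum>k\<in>{1..K}. a n k t) | n t. n \<in> {1..N} \<and> t \<in> {1..T}}"

definition energy ::
  "nat \<Rightarrow> nat \<Rightarrow> nat set \<Rightarrow> (nat \<Rightarrow> nat \<Rightarrow> nat \<Rightarrow> real) \<Rightarrow> (nat \<Rightarrow> nat \<Rightarrow> nat \<Rightarrow> real) \<Rightarrow> real" where
  "energy N K Ts a p = (\<Sum>n\<in>{1..N}. \<Sum>k\<in>{1..K}. \<Sum>t\<in>Ts. a n k t * p n k t)"

definition full_seq :: "nat \<Rightarrow> nat list \<Rightarrow> nat list" where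
  "full_seq T ts = 1 # ts @ [T + 1]"

definition samp_seq :: "nat \<Rightarrow> nat \<Rightarrow> nat list \<Rightarrow> bool" where
  "samp_seq T taubar ts \<longleftrightarrow>
     1 \<le> length ts \<and>
     (let s = full_seq T ts in
        sorted_wrt (<) (1 # ts) \<and> last ts \<le> T \<and>
        (\<forall>i\<le>length ts. 1 \<le> s ! (Suc i) - s ! i \<and> s ! (Suc i) - s ! i \<le> taubar))"

definition feasible_P3 where
  "feasible_P3 N K T kappa g delta2 pbar upsbar taubar eps a p ts \<longleftrightarrow>
     is_policy N K T pbar a p \<and> samp_seq T taubar ts \<and>
     theta N K T a \<le> real eps \<and>
     (\<forall>i\<le>length ts. exp_ups N K kappa g delta2 a p (full_seq T ts ! i) (full_seq T ts ! Suc i) \<ge> upsbar)"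

definition opt_P3 :: "nat \<Rightarrow> nat \<Rightarrow> nat \<Rightarrow> (nat \<Rightarrow> nat \<Rightarrow> nat \<Rightarrow> real) \<Rightarrow> (nat \<Rightarrow> nat \<Rightarrow> nat \<Rightarrow> real)
   \<Rightarrow> real \<Rightarrow> real \<Rightarrow> real \<Rightarrow> nat \<Rightarrow> nat \<Rightarrow> ereal" where
  "opt_P3 N K T kappa g delta2 pbar upsbar taubar eps =
     Inf {ereal (energy N K {1..T} a p) | a p ts.
            feasible_P3 N K T kappa g delta2 pbar upsbar taubar eps a p ts}"

definition feasible_P32 where
  "feasible_P32 N K kappa g delta2 pbar upsbar eps t1 t2 a p \<longleftrightarrow>
     (\<forall>n\<in>{1..N}. \<forall>k\<in>{1..K}. \<forall>t\<in>{t1..<t2}. a n k t \<in> {0, 1} \<and> 0 \<le> p n k t) \<and>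
     exp_ups N K kappa g delta2 a p t1 t2 \<ge> upsbar \<and>
     (\<forall>n\<in>{1..N}. \<forall>t\<in>{t1..<t2}. (\<Sum>k\<in>{1..K}. a n k t) \<le> real eps) \<and>
     (\<forall>k\<in>{1..K}. \<forall>t\<in>{t1..<t2}. (\<Sum>n\<in>{1..N}. a n k t) \<le> 1) \<and>
     (\<forall>t\<in>{t1..<t2}. (\<Sum>n\<in>{1..N}. \<Sum>k\<in>{1..K}. p n k t) \<le> pbar)"

text \<open>E^*(t1,t2): optimal value of P3-2 (+\<infinity> if infeasible, as Inf {} = \<infinity>).\<close>
definition Estar :: "nat \<Rightarrow> nat \<Rightarrow> (nat \<Rightarrow> nat \<Rightarrow> nat \<Rightarrow> real) \<Rightarrow> (nat \<Rightarrow> nat \<Rightarrow> nat \<Rightarrow> real)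
   \<Rightarrow> real \<Rightarrow> real \<Rightarrow> real \<Rightarrow> nat \<Rightarrow> nat \<Rightarrow> nat \<Rightarrow> ereal" where
  "Estar N K kappa g delta2 pbar upsbar eps t1 t2 =
     Inf {ereal (energy N K {t1..<t2} a p) | a p.
            feasible_P32 N K kappa g delta2 pbar upsbar eps t1 t2 a p}"

definition obj_P31 where
  "obj_P31 N K T kappa g delta2 pbar upsbar eps ts =
     (\<Sum>i\<in>{0..length ts}. Estar N K kappa g delta2 pbar upsbar eps
                              (full_seq T ts ! i) (full_seq T ts ! Suc i))"

definition opt_P31 :: "nat \<Rightarrow> nat \<Rightarrow> nat \<Rightarrow> (nat \<Rightarrow> nat \<Rightarrow> nat \<Rightarrow> real) \<Rightarrow> (nat \<Rightarrow> nat \<Rightarrow> nat \<Rightarrow> real)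
   \<Rightarrow> real \<Rightarrow> real \<Rightarrow> real \<Rightarrow> nat \<Rightarrow> nat \<Rightarrow> ereal" where
  "opt_P31 N K T kappa g delta2 pbar upsbar taubar eps =
     Inf {obj_P31 N K T kappa g delta2 pbar upsbar eps ts | ts. samp_seq T taubar ts}"

end

(*
  Every constraint of P3 either concerns a single slot t (binary assignments, nonnegative
  powers, at most one base station per resource block, the power budget, and, since theta
  is a maximum over slots, the bound eps) or the expected throughput of a single interval
  T(t_i, t_(i+1)); the energy is additive over these intervals. So for a fixed sampling
  sequence the policies restricted to the intervals can be chosen independently and glued,
  and the infimum of the total energy is the sum of the interval infima E*(t_i, t_(i+1)).
  Minimising over the sampling sequence then gives P3-1.
*)
theory Submission
  imports Defs
begin

lemma sorted_nth_UN_blocks: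
  assumes "sorted s" "m < length s"
  shows "{s!0..<s!m} = (\<Union>i<m. {s!i..<s!Suc i})"
  using assms(2)
proof (induction m)
  case 0
  then show ?case by simp
next
  case (Suc m)
  have "s!0 \<le> s!m" "s!m \<le> s!Suc m"
    using Suc.prems sorted_nth_mono[OF assms(1)] by auto
  then have "{s!0..<s!Suc m} = {s!0..<s!m} \<union> {s!m..<s!Suc m}"
    by (simp add: ivl_disj_un_two(3))
  then show ?case
    using Suc by (simp add: lessThan_Suc Un_commute)
qed

lemma sum_sorted_nth_blocks:
  fixes s :: "nat list"
  assumes "sorted s" "m < length s"
  shows "sum f {s!0..<s!m} = (\<Sum>i<m. sum f {s!i..<s!Suc i})"
  using assms(2)
proof (induction m)
  case 0
  then show ?case by simp
next
  case (Suc m)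
  have "s!0 \<le> s!m" "s!m \<le> s!Suc m"
    using Suc.prems sorted_nth_mono[OF assms(1)] by auto
  then have "sum f {s!0..<s!Suc m} = sum f {s!0..<s!m} + sum f {s!m..<s!Suc m}"
    by (rule sum.atLeastLessThan_concat[symmetric])
  then show ?case
    using Suc by simp
qed

lemma sorted_nth_blocks_glue:
  assumes "sorted s"
  shows "\<exists>x. \<forall>i t. Suc i < length s \<longrightarrow> t \<in> {s!i..<s!Suc i} \<longrightarrow> x t = w i t"
proof (intro exI allI impI)
  fix i t
  assume i: "Suc i < length s" and t: "t \<in> {s!i..<s!Suc i}"
  have "(LEAST j. t < s!Suc j) = i"
  proof (rule Least_equality)
    show "t < s!Suc i" using t by simp
  next
    fix j
    assume "t < s!Suc j"
    moreover have "j < i \<Longrightarrow> s!Suc j \<le> s!i"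
      using i sorted_nth_mono[OF assms] by simp
    ultimately show "i \<le> j" using t by fastforce
  qed
  then show "w (LEAST j. t < s!Suc j) t = w i t" by simp
qed

lemma INF_ereal_sum_decoupled:
  fixes f :: "'i \<Rightarrow> 'x \<Rightarrow> ereal"
  assumes "finite I" "Z \<noteq> {}"
    and "\<And>i x. i \<in> I \<Longrightarrow> x \<in> Z \<Longrightarrow> 0 \<le> f i x"
    and "\<And>w. (\<And>i. i \<in> I \<Longrightarrow> w i \<in> Z) \<Longrightarrow> \<exists>x\<in>Z. \<forall>i\<in>I. f i x = f i (w i)"
  shows "(INF x\<in>Z. \<Sum>i\<in>I. f i x) = (\<Sum>i\<in>I. INF x\<in>Z. f i x)"
  using assms(1,3,4)
proof (induction I rule: finite_induct)
  case empty
  then show ?case using \<open>Z \<noteq> {}\<close> by simp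
next
  case (insert j I)
  obtain z where z: "z \<in> Z" using \<open>Z \<noteq> {}\<close> by blast
  have glue_I: "\<exists>x\<in>Z. \<forall>i\<in>I. f i x = f i (w i)" if w: "\<And>i. i \<in> I \<Longrightarrow> w i \<in> Z" for w
  proof -
    have "(if i \<in> I then w i else z) \<in> Z" for i
      using w z by simp
    from insert.prems(2)[of "\<lambda>i. if i \<in> I then w i else z", OF this] show ?thesis by auto
  qed
  have directed: "\<exists>x\<in>Z. f j x + (\<Sum>i\<in>I. f i x) \<le> f j y + (\<Sum>i\<in>I. f i y')"
    if "y \<in> Z" "y' \<in> Z" for y y'
  proof -
    have "(if i = j then y else y') \<in> Z" for i
      using that by simp
    from insert.prems(2)[of "\<lambda>i. if i = j then y else y'", OF this] obtain x
      where x: "x \<in> Z" "\<forall>i\<in>insert j I. f i x = f i (if i = j then y else y')"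
      by blast
    have "(\<Sum>i\<in>I. f i x) = (\<Sum>i\<in>I. f i y')"
      using x(2) insert.hyps(2) by (intro sum.cong) auto
    then show ?thesis using x by (intro bexI[of _ x]) auto
  qed
  have "(INF x\<in>Z. \<Sum>i\<in>insert j I. f i x) = (INF x\<in>Z. f j x + (\<Sum>i\<in>I. f i x))"
    using insert.hyps by simp
  also have "\<dots> = (INF x\<in>Z. f j x) + (INF x\<in>Z. \<Sum>i\<in>I. f i x)"
    using directed insert.prems(1) by (intro INF_ereal_add_directed) (auto intro: sum_nonneg)
  also have "\<dots> = (\<Sum>i\<in>insert j I. INF x\<in>Z. f i x)"
    using insert glue_I by simp
  finally show ?case .
qed

lemma INF_ereal_sum_separable:
  fixes f :: "'i \<Rightarrow> 'x \<Rightarrow> ereal"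
  assumes "finite I" "\<And>i x. i \<in> I \<Longrightarrow> x \<in> S i \<Longrightarrow> 0 \<le> f i x"
    and glue: "\<And>w. (\<And>i. i \<in> I \<Longrightarrow> w i \<in> S i) \<Longrightarrow> \<exists>x\<in>(\<Inter>i\<in>I. S i). \<forall>i\<in>I. f i x = f i (w i)"
  shows "(INF x\<in>(\<Inter>i\<in>I. S i). \<Sum>i\<in>I. f i x) = (\<Sum>i\<in>I. INF x\<in>S i. f i x)"
proof (cases "\<exists>j\<in>I. S j = {}")
  case True
  then obtain j where j: "j \<in> I" "S j = {}" by blast
  then have "(INF x\<in>S j. f j x) = \<infinity>"
    by (simp add: top_ereal_def)
  then have "(\<Sum>i\<in>I. INF x\<in>S i. f i x) = \<infinity>"
    using j \<open>finite I\<close> by (subst sum_Pinfty) blast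
  moreover have "(\<Inter>i\<in>I. S i) = {}"
    using j by blast
  ultimately show ?thesis by (simp add: top_ereal_def)
next
  case False
  define Z where "Z = (\<Inter>i\<in>I. S i)"
  define any where "any i = (SOME x. x \<in> S i)" for i
  have any: "any i \<in> S i" if "i \<in> I" for i
    using False that unfolding any_def by (simp add: some_in_eq)
  have "Z \<noteq> {}"
    using glue[of any] any unfolding Z_def by blast
  have block: "(INF x\<in>S i. f i x) = (INF x\<in>Z. f i x)" if i: "i \<in> I" for i
  proof (rule antisym)
    show "(INF x\<in>S i. f i x) \<le> (INF x\<in>Z. f i x)"
      using i by (intro INF_superset_mono) (auto simp: Z_def)
  next
    show "(INF x\<in>Z. f i x) \<le> (INF x\<in>S i. f i x)"
    proof (rule INF_greatest)
      fix y
      assume y: "y \<in> S i"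
      have "(if l = i then y else any l) \<in> S l" if "l \<in> I" for l
        using y any that by simp
      from glue[of "\<lambda>l. if l = i then y else any l", OF this]
      obtain x where "x \<in> Z" "f i x = f i y"
        using i unfolding Z_def by force
      then show "(INF x\<in>Z. f i x) \<le> f i y" by (metis INF_lower)
    qed
  qed
  have "(INF x\<in>Z. \<Sum>i\<in>I. f i x) = (\<Sum>i\<in>I. INF x\<in>Z. f i x)"
  proof (rule INF_ereal_sum_decoupled)
    show "\<exists>x\<in>Z. \<forall>i\<in>I. f i x = f i (w i)" if "\<And>i. i \<in> I \<Longrightarrow> w i \<in> Z" for w
      using glue[of w] that unfolding Z_def by blast
  qed (use assms(1,2) \<open>Z \<noteq> {}\<close> in \<open>auto simp: Z_def\<close>)
  then show ?thesis
    using block unfolding Z_def by simp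
qed

definition slot_feasible ::
  "nat \<Rightarrow> nat \<Rightarrow> real \<Rightarrow> nat \<Rightarrow> (nat \<Rightarrow> nat \<Rightarrow> nat \<Rightarrow> real) \<Rightarrow> (nat \<Rightarrow> nat \<Rightarrow> nat \<Rightarrow> real)
   \<Rightarrow> nat \<Rightarrow> bool" where
  "slot_feasible N K pbar eps a p t \<longleftrightarrow>
     (\<forall>n\<in>{1..N}. \<forall>k\<in>{1..K}. a n k t \<in> {0, 1} \<and> 0 \<le> p n k t) \<and>
     (\<forall>n\<in>{1..N}. (\<Sum>k\<in>{1..K}. a n k t) \<le> real eps) \<and>
     (\<forall>k\<in>{1..K}. (\<Sum>n\<in>{1..N}. a n k t) \<le> 1) \<and>
     (\<Sum>n\<in>{1..N}. \<Sum>k\<in>{1..K}. p n k t) \<le> pbar"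

lemma slot_feasible_cong:
  assumes "\<And>n k. a n k t = a' n k t" "\<And>n k. p n k t = p' n k t"
  shows "slot_feasible N K pbar eps a p t = slot_feasible N K pbar eps a' p' t"
  using assms by (simp add: slot_feasible_def)

lemma feasible_P32_iff_slots:
  "feasible_P32 N K kappa g delta2 pbar upsbar eps t1 t2 a p \<longleftrightarrow>
     (\<forall>t\<in>{t1..<t2}. slot_feasible N K pbar eps a p t) \<and>
     upsbar \<le> exp_ups N K kappa g delta2 a p t1 t2"
  unfolding feasible_P32_def slot_feasible_def by blast

lemma theta_le_iff:
  assumes "0 < N" "0 < T"
  shows "theta N K T a \<le> r \<longleftrightarrow> (\<forall>n\<in>{1..N}. \<forall>t\<in>{1..T}. (\<Sum>k\<in>{1..K}. a n k t) \<le> r)"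
proof -
  have "{(\<Sum>k\<in>{1..K}. a n k t) | n t. n \<in> {1..N} \<and> t \<in> {1..T}}
      = (\<lambda>(n, t). \<Sum>k\<in>{1..K}. a n k t) ` ({1..N} \<times> {1..T})"
    by force
  then show ?thesis
    using assms unfolding theta_def by (subst Max_le_iff) auto
qed

lemma policy_theta_iff_slots:
  assumes "0 < N" "0 < T"
  shows "is_policy N K T pbar a p \<and> theta N K T a \<le> real eps \<longleftrightarrow>
           (\<forall>t\<in>{1..T}. slot_feasible N K pbar eps a p t)"
  unfolding is_policy_def theta_le_iff[OF assms] slot_feasible_def by blast

lemma exp_ups_cong:
  assumes "\<And>n k t. t \<in> {t1..<t2} \<Longrightarrow> a n k t = a' n k t"
    and "\<And>n k t. t \<in> {t1..<t2} \<Longrightarrow> p n k t = p' n k t"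
  shows "exp_ups N K kappa g delta2 a p t1 t2 = exp_ups N K kappa g delta2 a' p' t1 t2"
  unfolding exp_ups_def using assms by (intro sum.cong) auto

lemma energy_cong:
  assumes "\<And>n k t. t \<in> Ts \<Longrightarrow> a n k t = a' n k t"
    and "\<And>n k t. t \<in> Ts \<Longrightarrow> p n k t = p' n k t"
  shows "energy N K Ts a p = energy N K Ts a' p'"
  unfolding energy_def using assms by (intro sum.cong) auto

lemma feasible_P32_cong:
  assumes "\<And>n k t. t \<in> {t1..<t2} \<Longrightarrow> a n k t = a' n k t"
    and "\<And>n k t. t \<in> {t1..<t2} \<Longrightarrow> p n k t = p' n k t"
  shows "feasible_P32 N K kappa g delta2 pbar upsbar eps t1 t2 a p
           = feasible_P32 N K kappa g delta2 pbar upsbar eps t1 t2 a' p'"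
proof -
  have "slot_feasible N K pbar eps a p t = slot_feasible N K pbar eps a' p' t" if "t \<in> {t1..<t2}" for t
    using assms that by (intro slot_feasible_cong)
  then show ?thesis
    using exp_ups_cong[OF assms] by (simp add: feasible_P32_iff_slots)
qed

lemma feasible_P32_energy_nonneg:
  assumes "feasible_P32 N K kappa g delta2 pbar upsbar eps t1 t2 a p"
  shows "0 \<le> energy N K {t1..<t2} a p"
  using assms unfolding feasible_P32_def energy_def
  by (intro sum_nonneg) (metis insert_iff mult_nonneg_nonneg order_refl singletonD zero_le_one)

lemma length_full_seq: "length (full_seq T ts) = length ts + 2"
  by (simp add: full_seq_def)

lemma full_seq_first_last:
  "full_seq T ts ! 0 = 1" "full_seq T ts ! Suc (length ts) = T + 1"
  by (simp_all add: full_seq_def nth_append)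

lemma sorted_full_seq:
  assumes "samp_seq T taubar ts"
  shows "sorted (full_seq T ts)"
proof -
  have "\<forall>i\<le>length ts. 1 \<le> full_seq T ts ! Suc i - full_seq T ts ! i"
    using assms unfolding samp_seq_def Let_def by blast
  then have "full_seq T ts ! i \<le> full_seq T ts ! Suc i" if "i \<le> length ts" for i
    using that by fastforce
  then show ?thesis
    unfolding sorted_iff_nth_Suc length_full_seq by (simp add: less_Suc_eq_le)
qed

lemma UN_full_seq_blocks:
  assumes "samp_seq T taubar ts"
  shows "{1..T} = (\<Union>i\<in>{0..length ts}. {full_seq T ts ! i..<full_seq T ts ! Suc i})"
  using sorted_nth_UN_blocks[OF sorted_full_seq[OF assms], of "Suc (length ts)"]
  by (simp add: length_full_seq full_seq_first_last atLeast0AtMost lessThan_Suc_atMost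
      atLeastLessThanSuc_atLeastAtMost)

lemma sum_full_seq_blocks:
  assumes "samp_seq T taubar ts"
  shows "sum f {1..T} = (\<Sum>i\<in>{0..length ts}. sum f {full_seq T ts ! i..<full_seq T ts ! Suc i})"
  using sum_sorted_nth_blocks[OF sorted_full_seq[OF assms], of "Suc (length ts)"]
  by (simp add: length_full_seq full_seq_first_last atLeast0AtMost lessThan_Suc_atMost
      atLeastLessThanSuc_atLeastAtMost)

lemma energy_full_seq_blocks:
  assumes "samp_seq T taubar ts"
  shows "energy N K {1..T} a p
           = (\<Sum>i\<in>{0..length ts}. energy N K {full_seq T ts ! i..<full_seq T ts ! Suc i} a p)"
  unfolding energy_def sum_full_seq_blocks[OF assms]
  by (simp add: sum.swap[where B = "{0..length ts}"])

lemma feasible_P3_iff_blocks: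
  assumes "0 < N" "0 < T"
  shows "feasible_P3 N K T kappa g delta2 pbar upsbar taubar eps a p ts \<longleftrightarrow>
           samp_seq T taubar ts \<and>
           (\<forall>i\<le>length ts. feasible_P32 N K kappa g delta2 pbar upsbar eps
                                (full_seq T ts ! i) (full_seq T ts ! Suc i) a p)"
proof (cases "samp_seq T taubar ts")
  case True
  have "feasible_P3 N K T kappa g delta2 pbar upsbar taubar eps a p ts \<longleftrightarrow>
          (\<forall>t\<in>{1..T}. slot_feasible N K pbar eps a p t) \<and>
          (\<forall>i\<le>length ts. upsbar \<le> exp_ups N K kappa g delta2 a p
                                       (full_seq T ts ! i) (full_seq T ts ! Suc i))"
    using True policy_theta_iff_slots[OF assms] unfolding feasible_P3_def by blast
  then show ?thesis
    using True unfolding feasible_P32_iff_slots UN_full_seq_blocks[OF True] by auto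
qed (simp add: feasible_P3_def)

lemma full_seq_blocks_glue:
  assumes "samp_seq T taubar ts"
  obtains a p where
    "\<And>i n k t. i \<le> length ts \<Longrightarrow> t \<in> {full_seq T ts ! i..<full_seq T ts ! Suc i} \<Longrightarrow>
       a n k t = fst (W i) n k t \<and> p n k t = snd (W i) n k t"
proof -
  from sorted_nth_blocks_glue[OF sorted_full_seq[OF assms],
      of "\<lambda>i t. (\<lambda>n k. fst (W i) n k t, \<lambda>n k. snd (W i) n k t)"]
  obtain x where x: "\<forall>i t. Suc i < length (full_seq T ts) \<longrightarrow>
      t \<in> {full_seq T ts ! i..<full_seq T ts ! Suc i} \<longrightarrow>
      x t = (\<lambda>n k. fst (W i) n k t, \<lambda>n k. snd (W i) n k t)"
    by blast
  show ?thesis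
  proof (rule that)
    fix i n k t
    assume "i \<le> length ts" "t \<in> {full_seq T ts ! i..<full_seq T ts ! Suc i}"
    then have "x t = (\<lambda>n k. fst (W i) n k t, \<lambda>n k. snd (W i) n k t)"
      using x by (simp add: length_full_seq)
    then show "fst (x t) n k = fst (W i) n k t \<and> snd (x t) n k = snd (W i) n k t"
      by simp
  qed
qed

lemma INF_energy_feasible_P3:
  assumes "0 < N" "0 < T" "samp_seq T taubar ts"
  shows "(INF (a, p)\<in>{(a, p). feasible_P3 N K T kappa g delta2 pbar upsbar taubar eps a p ts}.
            ereal (energy N K {1..T} a p))
         = obj_P31 N K T kappa g delta2 pbar upsbar eps ts"
proof -
  define s where "s = full_seq T ts"
  define S where "S i = {(a, p). feasible_P32 N K kappa g delta2 pbar upsbar eps (s!i) (s!Suc i) a p}"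
    for i
  define e where "e i = (\<lambda>(a, p). ereal (energy N K {s!i..<s!Suc i} a p))" for i
  have feasible: "{(a, p). feasible_P3 N K T kappa g delta2 pbar upsbar taubar eps a p ts}
      = (\<Inter>i\<in>{0..length ts}. S i)"
    using feasible_P3_iff_blocks[OF assms(1,2)] assms(3) by (auto simp: S_def s_def)
  have energy: "ereal (energy N K {1..T} a p) = (\<Sum>i\<in>{0..length ts}. e i (a, p))" for a p
    using energy_full_seq_blocks[OF assms(3)] by (simp add: e_def s_def sum_ereal)
  have Estar: "(INF x\<in>S i. e i x) = Estar N K kappa g delta2 pbar upsbar eps (s!i) (s!Suc i)" for i
    unfolding Estar_def S_def e_def by (rule arg_cong[where f = Inf]) auto
  have "(INF x\<in>(\<Inter>i\<in>{0..length ts}. S i). \<Sum>i\<in>{0..length ts}. e i x)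
      = (\<Sum>i\<in>{0..length ts}. INF x\<in>S i. e i x)"
  proof (rule INF_ereal_sum_separable)
    show "0 \<le> e i x" if "x \<in> S i" for i x
      using that feasible_P32_energy_nonneg by (auto simp: S_def e_def)
  next
    fix w
    assume w: "\<And>i. i \<in> {0..length ts} \<Longrightarrow> w i \<in> S i"
    obtain a p where ap: "\<And>i n k t. i \<le> length ts \<Longrightarrow> t \<in> {s!i..<s!Suc i} \<Longrightarrow>
        a n k t = fst (w i) n k t \<and> p n k t = snd (w i) n k t"
      using full_seq_blocks_glue[OF assms(3)] unfolding s_def by blast
    have "(a, p) \<in> S i \<and> e i (a, p) = e i (w i)" if "i \<in> {0..length ts}" for i
      using w[OF that] that ap feasible_P32_cong[of "s!i" "s!Suc i" a "fst (w i)" p "snd (w i)"]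
        energy_cong[of "{s!i..<s!Suc i}" a "fst (w i)" p "snd (w i)"]
      by (auto simp: S_def e_def split: prod.splits)
    then show "\<exists>x\<in>(\<Inter>i\<in>{0..length ts}. S i). \<forall>i\<in>{0..length ts}. e i x = e i (w i)"
      by blast
  qed simp
  then show ?thesis
    unfolding feasible energy Estar obj_P31_def s_def by simp
qed

lemma opt_P3_eq_INF_samp_seq:
  "opt_P3 N K T kappa g delta2 pbar upsbar taubar eps
     = (INF ts\<in>{ts. samp_seq T taubar ts}.
          INF (a, p)\<in>{(a, p). feasible_P3 N K T kappa g delta2 pbar upsbar taubar eps a p ts}.
            ereal (energy N K {1..T} a p))"
  unfolding opt_P3_def
  by (rule antisym)
     (fastforce intro!: INF_greatest Inf_greatest intro: Inf_lower INF_lower2 simp: feasible_P3_def)+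

lemma opt_P3_eq_opt_P31:
  assumes "0 < N" "0 < T"
  shows "opt_P3 N K T kappa g delta2 pbar upsbar taubar eps
           = opt_P31 N K T kappa g delta2 pbar upsbar taubar eps"
proof -
  have "opt_P3 N K T kappa g delta2 pbar upsbar taubar eps
      = (INF ts\<in>{ts. samp_seq T taubar ts}. obj_P31 N K T kappa g delta2 pbar upsbar eps ts)"
    unfolding opt_P3_eq_INF_samp_seq
    by (intro INF_cong refl, rule INF_energy_feasible_P3[OF assms]) simp
  also have "\<dots> = opt_P31 N K T kappa g delta2 pbar upsbar taubar eps"
    unfolding opt_P31_def by (rule arg_cong[where f = Inf]) blast
  finally show ?thesis .
qed

lemma energy_eq_obj_P31:
  assumes "samp_seq T taubar ts"
    and "\<forall>i\<le>length ts. ereal (energy N K {full_seq T ts ! i..<full_seq T ts ! Suc i} a p)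
                        = Estar N K kappa g delta2 pbar upsbar eps (full_seq T ts ! i) (full_seq T ts ! Suc i)"
  shows "ereal (energy N K {1..T} a p) = obj_P31 N K T kappa g delta2 pbar upsbar eps ts"
proof -
  have "ereal (energy N K {1..T} a p)
      = (\<Sum>i\<in>{0..length ts}. ereal (energy N K {full_seq T ts ! i..<full_seq T ts ! Suc i} a p))"
    unfolding energy_full_seq_blocks[OF assms(1)] by (simp only: sum_ereal)
  also have "\<dots> = obj_P31 N K T kappa g delta2 pbar upsbar eps ts"
    using assms(2) unfolding obj_P31_def by (intro sum.cong) auto
  finally show ?thesis .
qed

theorem theorem1:
  fixes N K T taubar eps :: nat
    and kappa g :: "nat \<Rightarrow> nat \<Rightarrow> nat \<Rightarrow> real"
    and delta2 pbar upsbar :: real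
  assumes "0 < N" "0 < K" "0 < T"
    and "\<forall>n\<in>{1..N}. \<forall>k\<in>{1..K}. \<forall>t\<in>{1..T}. 0 < kappa n k t \<and> 0 < g n k t"
    and "0 < delta2" "0 < pbar" "0 < upsbar" "0 < taubar" "0 < eps"
  shows "opt_P3 N K T kappa g delta2 pbar upsbar taubar eps
           = opt_P31 N K T kappa g delta2 pbar upsbar taubar eps \<and>
         (\<forall>ts a p.
           samp_seq T taubar ts \<and>
           obj_P31 N K T kappa g delta2 pbar upsbar eps ts
             = opt_P31 N K T kappa g delta2 pbar upsbar taubar eps \<and>
           (\<forall>i\<le>length ts.
              feasible_P32 N K kappa g delta2 pbar upsbar eps
                (full_seq T ts ! i) (full_seq T ts ! Suc i) a p \<and>
              ereal (energy N K {full_seq T ts ! i..<full_seq T ts ! Suc i} a p)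
                = Estar N K kappa g delta2 pbar upsbar eps
                    (full_seq T ts ! i) (full_seq T ts ! Suc i))
           \<longrightarrow> feasible_P3 N K T kappa g delta2 pbar upsbar taubar eps a p ts \<and>
               ereal (energy N K {1..T} a p)
                 = opt_P3 N K T kappa g delta2 pbar upsbar taubar eps)"
proof (intro conjI allI impI)
  show opt: "opt_P3 N K T kappa g delta2 pbar upsbar taubar eps
      = opt_P31 N K T kappa g delta2 pbar upsbar taubar eps"
    using opt_P3_eq_opt_P31[OF assms(1,3)] .
  fix ts a p
  assume H: "samp_seq T taubar ts \<and>
    obj_P31 N K T kappa g delta2 pbar upsbar eps ts = opt_P31 N K T kappa g delta2 pbar upsbar taubar eps \<and>
    (\<forall>i\<le>length ts.
       feasible_P32 N K kappa g delta2 pbar upsbar eps (full_seq T ts ! i) (full_seq T ts ! Suc i) a p \<and>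
       ereal (energy N K {full_seq T ts ! i..<full_seq T ts ! Suc i} a p)
         = Estar N K kappa g delta2 pbar upsbar eps (full_seq T ts ! i) (full_seq T ts ! Suc i))"
  then show "feasible_P3 N K T kappa g delta2 pbar upsbar taubar eps a p ts"
    by (simp add: feasible_P3_iff_blocks[OF assms(1,3)])
  have "ereal (energy N K {1..T} a p) = obj_P31 N K T kappa g delta2 pbar upsbar eps ts"
    using H by (intro energy_eq_obj_P31) auto
  with H opt show "ereal (energy N K {1..T} a p) = opt_P3 N K T kappa g delta2 pbar upsbar taubar eps"
    by simp
qed

end
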